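(* Let $A$ and $B$ be bounded modular lattices and let $(\alpha,\beta)$ be a retractable Galois connection between $A$ and $B$ such that $\beta(0)=0$. Then: (i) $\mathrm{udim}(B)\le \mathrm{udim}(A)$. (ii) If $(\alpha,\beta)$ is essential, then $\mathrm{udim}(A)=\mathrm{udim}(B)$. (iii) If $A$ is cyclically generated, $(\alpha,\beta)$ is cyclically essential and $\beta$ is additive, then $\mathrm{udim}(A)=\mathrm{udim}(B)$.
   Context: A bounded lattice $(X,\wedge,\vee,0,1)$ has least element $0$ and greatest element $1$, $0\neq1$. A subset $Y\subseteq X\setminus\{0\}$ is join-independent if $(y_1\vee\cdots\vee y_n)\wedge x=0$ for every finite subset $\{y_1,\dots,y_n\}\subseteq Y$ and every $x\in Y\setminus\{y_1,\dots,y_n\}$. The uniform dimension $\mathrm{udim}(X)$ is the supremum of all $k$ such that $X$ has a join-independent subset with $k$ elements if this supremum is finite, and is $\infty$ otherwise (inequalities are understood in $\mathbb{N}\cup\{\infty\}$). A Galois connection between lattices $A$ and $B$ is a pair of order-preserving maps $\alpha:A\to B$, $\beta:B\to A$ with $\alpha(a)\le b$ iff $a\le\beta(b)$. For $a\le c$, $a$ is essential in $[0,c]=\{x:0\le x\le c\}$ if for every $x\le c$, $a\wedge x=0$ implies $x=0$. An element $a$ is cyclic if $[0,a]$ is a distributive lattice satisfying the ascending chain condition; $A$ is cyclically generated if every element is a join of cyclic elements. The Galois connection is essential (resp. cyclically essential) if for every $a\in A$ (resp. every cyclic $a\in A$), $a$ is essential in $[0,\beta\alpha(a)]$; it is retractable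 if for every $b\in B$, $\alpha\beta(b)$ is essential in $[0,b]$. The map $\beta$ is additive if $\beta(b\vee b')=\beta(b)\vee\beta(b')$ for all $b,b'\in B$ with $b\wedge b'=0$. *)

theory Defs
  imports Main "HOL-Library.Extended_Nat"
begin

definition modular_lattice :: "'a::bounded_lattice itself \<Rightarrow> bool" where
  "modular_lattice _ \<longleftrightarrow> (bot::'a) \<noteq> top \<and>
     (\<forall>x y z::'a. x \<le> z \<longrightarrow> sup x (inf y z) = inf (sup x y) z)"

definition fjoin :: "'a::bounded_lattice set \<Rightarrow> 'a" where
  "fjoin F = Finite_Set.fold sup bot F"

definition join_independent :: "'a::bounded_lattice set \<Rightarrow> bool" where
  "join_independent Y \<longleftrightarrow> bot \<notin> Y \<and>
     (\<forall>F x. finite F \<and> F \<subseteq> Y \<and> x \<in> Y - F \<longrightarrow> inf (fjoin F) x = bot)"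

definition udim :: "'a::bounded_lattice itself \<Rightarrow> enat" where
  "udim _ = Sup {enat (card Y) | Y::'a set. finite Y \<and> join_independent Y}"

definition galois_connection :: "('a::order \<Rightarrow> 'b::order) \<Rightarrow> ('b \<Rightarrow> 'a) \<Rightarrow> bool" where
  "galois_connection \<alpha> \<beta> \<longleftrightarrow> mono \<alpha> \<and> mono \<beta> \<and> (\<forall>a b. \<alpha> a \<le> b \<longleftrightarrow> a \<le> \<beta> b)"

definition essential_in :: "'a::bounded_lattice \<Rightarrow> 'a \<Rightarrow> bool" where
  "essential_in a c \<longleftrightarrow> a \<le> c \<and> (\<forall>x. x \<le> c \<and> inf a x = bot \<longrightarrow> x = bot)"

definition cyclic :: "'a::bounded_lattice \<Rightarrow> bool" where
  "cyclic a \<longleftrightarrow>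
     (\<forall>x y z. x \<le> a \<and> y \<le> a \<and> z \<le> a \<longrightarrow> inf x (sup y z) = sup (inf x y) (inf x z)) \<and>
     \<not> (\<exists>f::nat \<Rightarrow> 'a. \<forall>n. f n \<le> a \<and> f n < f (Suc n))"

definition is_join_of :: "'a::bounded_lattice \<Rightarrow> 'a set \<Rightarrow> bool" where
  "is_join_of x S \<longleftrightarrow> (\<forall>s\<in>S. s \<le> x) \<and> (\<forall>u. (\<forall>s\<in>S. s \<le> u) \<longrightarrow> x \<le> u)"

definition cyclically_generated :: "'a::bounded_lattice itself \<Rightarrow> bool" where
  "cyclically_generated _ \<longleftrightarrow> (\<forall>x::'a. \<exists>S. (\<forall>s\<in>S. cyclic s) \<and> is_join_of x S)"

definition essential_gc :: "('a::bounded_lattice \<Rightarrow> 'b::bounded_lattice) \<Rightarrow> ('b \<Rightarrow> 'a) \<Rightarrow> bool" where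
  "essential_gc \<alpha> \<beta> \<longleftrightarrow> (\<forall>a. essential_in a (\<beta> (\<alpha> a)))"

definition cyclically_essential_gc :: "('a::bounded_lattice \<Rightarrow> 'b::bounded_lattice) \<Rightarrow> ('b \<Rightarrow> 'a) \<Rightarrow> bool" where
  "cyclically_essential_gc \<alpha> \<beta> \<longleftrightarrow> (\<forall>a. cyclic a \<longrightarrow> essential_in a (\<beta> (\<alpha> a)))"

definition retractable_gc :: "('a::bounded_lattice \<Rightarrow> 'b::bounded_lattice) \<Rightarrow> ('b \<Rightarrow> 'a) \<Rightarrow> bool" where
  "retractable_gc \<alpha> \<beta> \<longleftrightarrow> (\<forall>b. essential_in (\<alpha> (\<beta> b)) b)"

definition additive :: "('b::bounded_lattice \<Rightarrow> 'a::bounded_lattice) \<Rightarrow> bool" where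
  "additive \<beta> \<longleftrightarrow> (\<forall>b b'. inf b b' = bot \<longrightarrow> \<beta> (sup b b') = sup (\<beta> b) (\<beta> b'))"

end

theory Submission
  imports Defs
begin

text \<open>
  A finite join-independent set can be transported along the connection. Its image under \<beta> stays
  join-independent because \<beta> preserves meets and, by retractability, kills only 0; this gives (i).
  For the image under \<alpha> one needs each finite join s of the set to be essential in \<beta>\<alpha>(s): two
  disjoint elements then have disjoint essential closures \<beta>\<alpha>(s), \<beta>\<alpha>(s'), so \<beta>(\<alpha> s \<sqinter> \<alpha> s') = 0
  and hence \<alpha> s \<sqinter> \<alpha> s' = 0. Essentiality of all joins is assumed in (ii); in (iii) every member of
  the set is first shrunk to a nonzero cyclic element below it, and essentiality then passes from the
  members to their finite joins by induction, using additivity of \<beta> and the fact that in a modular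
  lattice joins of essential extensions of disjoint elements are essential.
\<close>

lemma fjoin_empty [simp]: "fjoin {} = bot"
  by (simp add: fjoin_def)

lemma fjoin_insert [simp]:
  fixes x :: "'a::bounded_lattice"
  assumes "finite F"
  shows "fjoin (insert x F) = sup x (fjoin F)"
proof -
  interpret comp_fun_idem "sup :: 'a \<Rightarrow> 'a \<Rightarrow> 'a" by (fact comp_fun_idem_sup)
  show ?thesis using assms by (simp add: fjoin_def)
qed

lemma fjoin_upper: "finite F \<Longrightarrow> x \<in> F \<Longrightarrow> x \<le> fjoin F"
  by (induction F rule: finite_induct) (auto intro: le_supI2)

lemma fjoin_least: "finite F \<Longrightarrow> (\<And>x. x \<in> F \<Longrightarrow> x \<le> u) \<Longrightarrow> fjoin F \<le> u"
  by (induction F rule: finite_induct) auto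

lemma fjoin_image_le:
  assumes "finite F" and "\<And>x. x \<in> F \<Longrightarrow> f x \<le> g x"
  shows "fjoin (f ` F) \<le> fjoin (g ` F)"
  using assms by (auto intro!: fjoin_least intro: order_trans[OF _ fjoin_upper])

lemma join_independentD:
  "join_independent Y \<Longrightarrow> finite F \<Longrightarrow> F \<subseteq> Y \<Longrightarrow> x \<in> Y \<Longrightarrow> x \<notin> F \<Longrightarrow> inf (fjoin F) x = bot"
  unfolding join_independent_def by blast

lemma join_independent_nonzero: "join_independent Y \<Longrightarrow> y \<in> Y \<Longrightarrow> y \<noteq> bot"
  unfolding join_independent_def by blast

lemma join_independent_image:
  assumes indep: "join_independent Y"
    and nonzero: "\<And>y. y \<in> Y \<Longrightarrow> f y \<noteq> bot"
    and disjoint: "\<And>F x. finite F \<Longrightarrow> F \<subseteq> Y \<Longrightarrow> x \<in> Y \<Longrightarrow> x \<notin> F \<Longrightarrow>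
                     inf (fjoin (f ` F)) (f x) = bot"
  shows "join_independent (f ` Y)" and "inj_on f Y"
proof -
  show inj: "inj_on f Y"
  proof (rule inj_onI, rule ccontr)
    fix x y assume "x \<in> Y" "y \<in> Y" "f x = f y" "x \<noteq> y"
    with disjoint[of "{y}" x] nonzero show False by simp
  qed
  show "join_independent (f ` Y)"
    unfolding join_independent_def
  proof (intro conjI allI impI)
    show "bot \<notin> f ` Y" using nonzero by (metis imageE)
    fix G z assume G: "finite G \<and> G \<subseteq> f ` Y \<and> z \<in> f ` Y - G"
    define F where "F = f -` G \<inter> Y"
    have "finite F" unfolding F_def using G inj by (simp add: finite_vimage_IntI)
    moreover have "F \<subseteq> Y" by (simp add: F_def)
    moreover obtain x where x: "x \<in> Y" "z = f x" using G by blast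
    moreover have "x \<notin> F" using G x by (simp add: F_def)
    moreover have "G = f ` F" using G by (auto simp: F_def)
    ultimately show "inf (fjoin G) z = bot" using disjoint by simp
  qed
qed

lemma udim_le_if_join_independent_image:
  fixes f :: "'a::bounded_lattice \<Rightarrow> 'b::bounded_lattice"
  assumes "\<And>Y. finite Y \<Longrightarrow> join_independent Y \<Longrightarrow> join_independent (f ` Y) \<and> inj_on f Y"
  shows "udim TYPE('a) \<le> udim TYPE('b)"
  unfolding udim_def
proof (rule Sup_mono)
  fix n assume "n \<in> {enat (card Y) |Y::'a set. finite Y \<and> join_independent Y}"
  then obtain Y :: "'a set" where "n = enat (card Y)" "finite Y" "join_independent Y" by blast
  with assms[of Y] have "n = enat (card (f ` Y)) \<and> finite (f ` Y) \<and> join_independent (f ` Y)"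
    by (simp add: card_image)
  then show "\<exists>m\<in>{enat (card Z) |Z::'b set. finite Z \<and> join_independent Z}. n \<le> m" by blast
qed

lemma galois_connectionD: "galois_connection \<alpha> \<beta> \<Longrightarrow> \<alpha> a \<le> b \<longleftrightarrow> a \<le> \<beta> b"
  by (simp add: galois_connection_def)

lemma galois_connection_unit:
  assumes "galois_connection \<alpha> \<beta>"
  shows "a \<le> \<beta> (\<alpha> a)"
  using galois_connectionD[OF assms, of a "\<alpha> a"] by simp

lemma galois_connection_lower_bot:
  fixes \<alpha> :: "'a::bounded_lattice \<Rightarrow> 'b::bounded_lattice"
  assumes "galois_connection \<alpha> \<beta>"
  shows "\<alpha> bot = bot"
proof -
  have "\<alpha> bot \<le> bot" using galois_connectionD[OF assms, of bot bot] by simp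
  then show ?thesis by (rule bot_unique[THEN iffD1])
qed

lemma galois_connection_lower_sup:
  fixes \<alpha> :: "'a::bounded_lattice \<Rightarrow> 'b::bounded_lattice"
  assumes "galois_connection \<alpha> \<beta>"
  shows "\<alpha> (sup x y) = sup (\<alpha> x) (\<alpha> y)"
proof (rule antisym)
  have "x \<le> \<beta> (sup (\<alpha> x) (\<alpha> y))" and "y \<le> \<beta> (sup (\<alpha> x) (\<alpha> y))"
    by (simp_all add: galois_connectionD[OF assms, symmetric])
  then show "\<alpha> (sup x y) \<le> sup (\<alpha> x) (\<alpha> y)"
    by (simp add: galois_connectionD[OF assms])
  have "mono \<alpha>" using assms by (simp add: galois_connection_def)
  then show "sup (\<alpha> x) (\<alpha> y) \<le> \<alpha> (sup x y)"
    using monoD[of \<alpha> x "sup x y"] monoD[of \<alpha> y "sup x y"] by simp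
qed

lemma galois_connection_upper_inf:
  fixes \<alpha> :: "'a::bounded_lattice \<Rightarrow> 'b::bounded_lattice"
  assumes "galois_connection \<alpha> \<beta>"
  shows "\<beta> (inf x y) = inf (\<beta> x) (\<beta> y)"
proof (rule antisym)
  have "mono \<beta>" using assms by (simp add: galois_connection_def)
  then show "\<beta> (inf x y) \<le> inf (\<beta> x) (\<beta> y)"
    using monoD[of \<beta> "inf x y" x] monoD[of \<beta> "inf x y" y] by simp
  have "\<alpha> (inf (\<beta> x) (\<beta> y)) \<le> x" and "\<alpha> (inf (\<beta> x) (\<beta> y)) \<le> y"
    by (simp_all add: galois_connectionD[OF assms])
  then show "inf (\<beta> x) (\<beta> y) \<le> \<beta> (inf x y)"
    by (simp add: galois_connectionD[OF assms, symmetric])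
qed

lemma galois_connection_lower_fjoin:
  fixes \<alpha> :: "'a::bounded_lattice \<Rightarrow> 'b::bounded_lattice"
  assumes "galois_connection \<alpha> \<beta>" and "finite F"
  shows "\<alpha> (fjoin F) = fjoin (\<alpha> ` F)"
  using assms(2) by (induction F rule: finite_induct)
    (simp_all add: galois_connection_lower_bot[OF assms(1)] galois_connection_lower_sup[OF assms(1)])

lemma essential_in_le: "essential_in a c \<Longrightarrow> a \<le> c"
  by (simp add: essential_in_def)

lemma essential_inD: "essential_in a c \<Longrightarrow> x \<le> c \<Longrightarrow> inf a x = bot \<Longrightarrow> x = bot"
  by (simp add: essential_in_def)

lemma retractable_upper_eq_bot:
  fixes \<alpha> :: "'a::bounded_lattice \<Rightarrow> 'b::bounded_lattice"
  assumes "galois_connection \<alpha> \<beta>" and "retractable_gc \<alpha> \<beta>" and "\<beta> b = bot"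
  shows "b = bot"
proof (rule essential_inD)
  show "essential_in (\<alpha> (\<beta> b)) b" using assms(2) by (simp add: retractable_gc_def)
  show "inf (\<alpha> (\<beta> b)) b = bot" using assms(3) galois_connection_lower_bot[OF assms(1)] by simp
qed simp

lemma inf_absorb_left:
  fixes u :: "'a::semilattice_inf"
  shows "u \<le> v \<Longrightarrow> inf u (inf v z) = inf u z"
  by (metis inf.absorb1 inf.assoc)

lemma essential_in_trans:
  assumes uv: "essential_in u v" and vw: "essential_in v w"
  shows "essential_in u w"
  unfolding essential_in_def
proof (intro conjI allI impI)
  have "u \<le> v" "v \<le> w" using uv vw by (simp_all add: essential_in_le)
  then show "u \<le> w" by (rule order_trans)
  fix z assume "z \<le> w \<and> inf u z = bot"
  then have "z \<le> w" and "inf u (inf v z) = bot" using \<open>u \<le> v\<close> by (simp_all add: inf_absorb_left)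
  then show "z = bot" using essential_inD[OF uv inf_le1] essential_inD[OF vw] by simp
qed

lemma essential_in_disjoint:
  assumes xx: "essential_in x x'" and yy: "essential_in y y'" and disj: "inf x y = bot"
  shows "inf x' y' = bot"
proof -
  have "inf x (inf x' y) = bot"
    using essential_in_le[OF xx] disj by (simp add: inf_absorb_left)
  then have "inf x' y = bot" by (rule essential_inD[OF xx inf_le1])
  then have "inf y (inf y' x') = bot"
    using inf_absorb_left[OF essential_in_le[OF yy]] by (simp add: inf.commute)
  then have "inf y' x' = bot" by (rule essential_inD[OF yy inf_le1])
  then show ?thesis by (simp add: inf.commute)
qed

lemma essential_in_lower_disjoint:
  fixes \<alpha> :: "'a::bounded_lattice \<Rightarrow> 'b::bounded_lattice"
  assumes "galois_connection \<alpha> \<beta>" and "retractable_gc \<alpha> \<beta>"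
    and "essential_in x (\<beta> (\<alpha> x))" and "essential_in y (\<beta> (\<alpha> y))" and "inf x y = bot"
  shows "inf (\<alpha> x) (\<alpha> y) = bot"
proof -
  have "\<beta> (inf (\<alpha> x) (\<alpha> y)) = bot"
    using essential_in_disjoint[OF assms(3-5)] by (simp add: galois_connection_upper_inf[OF assms(1)])
  then show ?thesis by (rule retractable_upper_eq_bot[OF assms(1,2)])
qed

lemma modular_latticeD:
  fixes x :: "'a::bounded_lattice"
  shows "modular_lattice TYPE('a) \<Longrightarrow> x \<le> z \<Longrightarrow> sup x (inf y z) = inf (sup x y) z"
  unfolding modular_lattice_def by blast

lemma modular_inf_sup_sup:
  fixes a :: "'a::bounded_lattice"
  assumes "modular_lattice TYPE('a)" and "inf a (sup y b) = bot"
  shows "inf (sup y a) (sup y b) = y"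
  using modular_latticeD[OF assms(1), of y "sup y b" a] assms(2) by simp

lemma essential_in_sup_right:
  fixes x :: "'a::bounded_lattice"
  assumes M: "modular_lattice TYPE('a)" and ess: "essential_in x x'" and disj: "inf x' y = bot"
  shows "essential_in (sup x y) (sup x' y)"
  unfolding essential_in_def
proof (intro conjI allI impI)
  have "x \<le> x'" by (rule essential_in_le[OF ess])
  then show "sup x y \<le> sup x' y" by (simp add: le_supI1)
  fix z assume z: "z \<le> sup x' y \<and> inf (sup x y) z = bot"
  \<comment> \<open>Modularity over y, used twice, shows first (y \<squnion> z) \<sqinter> x' = 0 and then z \<le> y.\<close>
  have "inf (sup y z) (sup y x) = y"
    using z by (intro modular_inf_sup_sup[OF M]) (simp add: inf_commute sup_commute)
  moreover have "inf x (inf (sup y z) x') \<le> inf (sup y z) (sup y x)"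
    by (simp add: le_infI1 le_infI2)
  moreover have "inf x (inf (sup y z) x') \<le> x'"
    using \<open>x \<le> x'\<close> by (simp add: le_infI1)
  ultimately have "inf x (inf (sup y z) x') \<le> inf y x'" by simp
  then have "inf x (inf (sup y z) x') = bot"
    using disj by (simp add: inf_commute bot_unique)
  then have "inf (sup y z) x' = bot" by (rule essential_inD[OF ess inf_le2])
  then have "inf (sup y x') (sup y z) = y"
    by (intro modular_inf_sup_sup[OF M]) (simp add: inf_commute)
  moreover have "sup y z \<le> sup y x'" using z by (simp add: sup_commute)
  ultimately have "sup y z = y" by (simp add: inf.absorb2)
  then have "z \<le> y" by (rule sup.absorb_iff1[THEN iffD2])
  then show "z = bot" using z by (simp add: inf.absorb2 le_supI2)
qed

lemma essential_in_sup:
  fixes x :: "'a::bounded_lattice"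
  assumes M: "modular_lattice TYPE('a)" and "essential_in x x'" and "essential_in y y'"
    and disj: "inf x' y' = bot"
  shows "essential_in (sup x y) (sup x' y')"
proof (rule essential_in_trans)
  have "inf x' y \<le> inf x' y'" using essential_in_le[OF assms(3)] by (simp add: le_infI2)
  then have "inf x' y = bot" using disj by (simp add: bot_unique)
  then show "essential_in (sup x y) (sup x' y)" by (rule essential_in_sup_right[OF M assms(2)])
  have "essential_in (sup y x') (sup y' x')"
    using disj by (intro essential_in_sup_right[OF M assms(3)]) (simp add: inf_commute)
  then show "essential_in (sup x' y) (sup x' y')" by (simp only: sup.commute[of x'])
qed

lemma join_independent_upper_image:
  fixes \<alpha> :: "'a::bounded_lattice \<Rightarrow> 'b::bounded_lattice"
  assumes g: "galois_connection \<alpha> \<beta>" and r: "retractable_gc \<alpha> \<beta>" and b0: "\<beta> bot = bot"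
    and indep: "join_independent Y"
  shows "join_independent (\<beta> ` Y) \<and> inj_on \<beta> Y"
proof -
  have mono: "mono \<beta>" using g by (simp add: galois_connection_def)
  have "inf (fjoin (\<beta> ` F)) (\<beta> x) = bot"
    if "finite F" "F \<subseteq> Y" "x \<in> Y" "x \<notin> F" for F x
  proof -
    have "fjoin (\<beta> ` F) \<le> \<beta> (fjoin F)"
      using \<open>finite F\<close> by (auto intro!: fjoin_least monoD[OF mono] fjoin_upper)
    then have "inf (fjoin (\<beta> ` F)) (\<beta> x) \<le> \<beta> (inf (fjoin F) x)"
      by (simp add: galois_connection_upper_inf[OF g] le_infI1)
    also have "\<dots> = bot" using join_independentD[OF indep that] b0 by simp
    finally show ?thesis by (rule bot_unique[THEN iffD1])
  qed
  moreover have "\<beta> y \<noteq> bot" if "y \<in> Y" for y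
    using retractable_upper_eq_bot[OF g r] join_independent_nonzero[OF indep that] by blast
  ultimately show ?thesis using join_independent_image[OF indep, of \<beta>] by simp
qed

lemma join_independent_lower_image:
  fixes \<alpha> :: "'a::bounded_lattice \<Rightarrow> 'b::bounded_lattice"
  assumes g: "galois_connection \<alpha> \<beta>" and r: "retractable_gc \<alpha> \<beta>" and b0: "\<beta> bot = bot"
    and indep: "join_independent Y"
    and ess: "\<And>F. finite F \<Longrightarrow> F \<subseteq> Y \<Longrightarrow> essential_in (fjoin F) (\<beta> (\<alpha> (fjoin F)))"
  shows "join_independent (\<alpha> ` Y) \<and> inj_on \<alpha> Y"
proof -
  have "inf (fjoin (\<alpha> ` F)) (\<alpha> x) = bot"
    if "finite F" "F \<subseteq> Y" "x \<in> Y" "x \<notin> F" for F x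
  proof -
    have "essential_in (fjoin F) (\<beta> (\<alpha> (fjoin F)))" using ess that by blast
    moreover have "essential_in x (\<beta> (\<alpha> x))" using ess[of "{x}"] that by simp
    ultimately have "inf (\<alpha> (fjoin F)) (\<alpha> x) = bot"
      using essential_in_lower_disjoint[OF g r] join_independentD[OF indep that] by blast
    then show ?thesis by (simp add: galois_connection_lower_fjoin[OF g that(1)])
  qed
  moreover have "\<alpha> y \<noteq> bot" if "y \<in> Y" for y
    using galois_connection_unit[OF g, of y] b0 join_independent_nonzero[OF indep that]
    by (auto simp: bot_unique)
  ultimately show ?thesis using join_independent_image[OF indep] by blast
qed

lemma essential_in_fjoin:
  fixes \<alpha> :: "'a::bounded_lattice \<Rightarrow> 'b::bounded_lattice"
  assumes M: "modular_lattice TYPE('a)"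
    and g: "galois_connection \<alpha> \<beta>" and r: "retractable_gc \<alpha> \<beta>" and b0: "\<beta> bot = bot"
    and add: "additive \<beta>" and indep: "join_independent Y"
    and ess: "\<And>y. y \<in> Y \<Longrightarrow> essential_in y (\<beta> (\<alpha> y))"
  shows "finite F \<Longrightarrow> F \<subseteq> Y \<Longrightarrow> essential_in (fjoin F) (\<beta> (\<alpha> (fjoin F)))"
proof (induction F rule: finite_induct)
  case empty
  show ?case by (simp add: galois_connection_lower_bot[OF g] b0 essential_in_def bot_unique)
next
  case (insert y F)
  let ?s = "fjoin F"
  have ess_s: "essential_in ?s (\<beta> (\<alpha> ?s))" and ess_y: "essential_in y (\<beta> (\<alpha> y))"
    using insert ess by simp_all
  have "inf ?s y = bot" using join_independentD[OF indep] insert by blast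
  then have "inf (\<alpha> ?s) (\<alpha> y) = bot" by (rule essential_in_lower_disjoint[OF g r ess_s ess_y])
  then have "\<beta> (\<alpha> (sup ?s y)) = sup (\<beta> (\<alpha> ?s)) (\<beta> (\<alpha> y))"
    using add by (simp add: additive_def galois_connection_lower_sup[OF g])
  moreover have "essential_in (sup ?s y) (sup (\<beta> (\<alpha> ?s)) (\<beta> (\<alpha> y)))"
    using essential_in_disjoint[OF ess_s ess_y \<open>inf ?s y = bot\<close>]
    by (rule essential_in_sup[OF M ess_s ess_y])
  ultimately show ?case using insert by (simp add: sup_commute)
qed

lemma join_independent_lower_image_cyclic:
  fixes \<alpha> :: "'a::bounded_lattice \<Rightarrow> 'b::bounded_lattice"
  assumes M: "modular_lattice TYPE('a)"
    and g: "galois_connection \<alpha> \<beta>" and r: "retractable_gc \<alpha> \<beta>" and b0: "\<beta> bot = bot"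
    and add: "additive \<beta>" and ce: "cyclically_essential_gc \<alpha> \<beta>"
    and indep: "join_independent Y" and cyc: "\<And>y. y \<in> Y \<Longrightarrow> cyclic y"
  shows "join_independent (\<alpha> ` Y) \<and> inj_on \<alpha> Y"
proof (rule join_independent_lower_image[OF g r b0 indep])
  fix F assume "finite F" "F \<subseteq> Y"
  moreover have "essential_in y (\<beta> (\<alpha> y))" if "y \<in> Y" for y
    using ce cyc[OF that] by (simp add: cyclically_essential_gc_def)
  ultimately show "essential_in (fjoin F) (\<beta> (\<alpha> (fjoin F)))"
    using essential_in_fjoin[OF M g r b0 add indep] by blast
qed

lemma cyclically_generated_ex_cyclic_below:
  fixes y :: "'a::bounded_lattice"
  assumes "cyclically_generated TYPE('a)" and "y \<noteq> bot"
  shows "\<exists>c. cyclic c \<and> c \<le> y \<and> c \<noteq> bot"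
proof -
  obtain S where S: "\<forall>s\<in>S. cyclic s" "is_join_of y S"
    using assms(1) unfolding cyclically_generated_def by blast
  show ?thesis
  proof (rule ccontr)
    assume "\<not> ?thesis"
    with S have "\<forall>s\<in>S. s \<le> bot" by (auto simp: is_join_of_def)
    with S(2) assms(2) show False by (auto simp: is_join_of_def bot_unique)
  qed
qed

lemma join_independent_shrink:
  assumes indep: "join_independent Y" and below: "\<And>y. y \<in> Y \<Longrightarrow> c y \<le> y \<and> c y \<noteq> bot"
  shows "join_independent (c ` Y) \<and> inj_on c Y"
proof -
  have "inf (fjoin (c ` F)) (c x) = bot"
    if "finite F" "F \<subseteq> Y" "x \<in> Y" "x \<notin> F" for F x
  proof -
    have "fjoin (c ` F) \<le> fjoin F"
      using fjoin_image_le[of F c id] that below by auto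
    moreover have "c x \<le> x" using below[OF \<open>x \<in> Y\<close>] ..
    ultimately have "inf (fjoin (c ` F)) (c x) \<le> inf (fjoin F) x" by (rule inf_mono)
    then show ?thesis using join_independentD[OF indep that] by (simp add: bot_unique)
  qed
  then show ?thesis using join_independent_image[OF indep] below by blast
qed

lemma cyclically_generated_obtains_shrink:
  assumes "cyclically_generated TYPE('a::bounded_lattice)"
  obtains c :: "'a::bounded_lattice \<Rightarrow> 'a" where
    "\<And>Y. join_independent Y \<Longrightarrow> join_independent (c ` Y) \<and> inj_on c Y \<and> (\<forall>y\<in>Y. cyclic (c y))"
proof -
  obtain c :: "'a::bounded_lattice \<Rightarrow> 'a" where c: "\<And>y. y \<noteq> bot \<Longrightarrow> cyclic (c y) \<and> c y \<le> y \<and> c y \<noteq> bot"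
    using cyclically_generated_ex_cyclic_below[OF assms] by metis
  have "join_independent (c ` Y) \<and> inj_on c Y \<and> (\<forall>y\<in>Y. cyclic (c y))" if "join_independent Y" for Y
    using join_independent_shrink[OF that] c join_independent_nonzero[OF that] by blast
  then show ?thesis by (rule that)
qed

lemma udim_le_if_retractable_gc:
  fixes \<alpha> :: "'a::bounded_lattice \<Rightarrow> 'b::bounded_lattice"
  assumes g: "galois_connection \<alpha> \<beta>" and r: "retractable_gc \<alpha> \<beta>" and b0: "\<beta> bot = bot"
  shows "udim TYPE('b) \<le> udim TYPE('a)"
  by (rule udim_le_if_join_independent_image) (rule join_independent_upper_image[OF g r b0])

lemma udim_le_if_essential_gc:
  fixes \<alpha> :: "'a::bounded_lattice \<Rightarrow> 'b::bounded_lattice"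
  assumes g: "galois_connection \<alpha> \<beta>" and r: "retractable_gc \<alpha> \<beta>" and b0: "\<beta> bot = bot"
    and "essential_gc \<alpha> \<beta>"
  shows "udim TYPE('a) \<le> udim TYPE('b)"
proof (rule udim_le_if_join_independent_image)
  fix Y :: "'a set" assume "join_independent Y"
  then show "join_independent (\<alpha> ` Y) \<and> inj_on \<alpha> Y"
    using assms(4) by (intro join_independent_lower_image[OF g r b0]) (simp_all add: essential_gc_def)
qed

lemma udim_le_if_cyclically_essential_gc:
  fixes \<alpha> :: "'a::bounded_lattice \<Rightarrow> 'b::bounded_lattice"
  assumes g: "galois_connection \<alpha> \<beta>" and r: "retractable_gc \<alpha> \<beta>" and b0: "\<beta> bot = bot"
    and M: "modular_lattice TYPE('a)" and cg: "cyclically_generated TYPE('a)"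
    and ce: "cyclically_essential_gc \<alpha> \<beta>" and add: "additive \<beta>"
  shows "udim TYPE('a) \<le> udim TYPE('b)"
proof -
  obtain c :: "'a \<Rightarrow> 'a" where
    c: "\<And>Y. join_independent Y \<Longrightarrow> join_independent (c ` Y) \<and> inj_on c Y \<and> (\<forall>y\<in>Y. cyclic (c y))"
    using cyclically_generated_obtains_shrink[OF cg] by blast
  have "join_independent ((\<alpha> \<circ> c) ` Y) \<and> inj_on (\<alpha> \<circ> c) Y" if "join_independent Y" for Y
  proof -
    have cY: "join_independent (c ` Y)" "inj_on c Y" "\<forall>y\<in>c ` Y. cyclic y" using c[OF that] by auto
    then have "join_independent (\<alpha> ` c ` Y) \<and> inj_on \<alpha> (c ` Y)"
      by (intro join_independent_lower_image_cyclic[OF M g r b0 add ce]) auto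
    with cY(2) show ?thesis by (simp add: image_image comp_inj_on)
  qed
  then show ?thesis by (rule udim_le_if_join_independent_image)
qed

theorem theorem4p1:
  fixes \<alpha> :: "'a::bounded_lattice \<Rightarrow> 'b::bounded_lattice" and \<beta> :: "'b \<Rightarrow> 'a"
  assumes "modular_lattice TYPE('a)" and "modular_lattice TYPE('b)"
    and "galois_connection \<alpha> \<beta>" and "retractable_gc \<alpha> \<beta>" and "\<beta> bot = bot"
  shows "udim TYPE('b) \<le> udim TYPE('a) \<and>
         (essential_gc \<alpha> \<beta> \<longrightarrow> udim TYPE('a) = udim TYPE('b)) \<and>
         (cyclically_generated TYPE('a) \<and> cyclically_essential_gc \<alpha> \<beta> \<and> additive \<beta>
           \<longrightarrow> udim TYPE('a) = udim TYPE('b))"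
proof -
  note gc = assms(3-5)
  have i: "udim TYPE('b) \<le> udim TYPE('a)" by (rule udim_le_if_retractable_gc[OF gc])
  have "udim TYPE('a) \<le> udim TYPE('b)" if "essential_gc \<alpha> \<beta>"
    by (rule udim_le_if_essential_gc[OF gc that])
  moreover have "udim TYPE('a) \<le> udim TYPE('b)"
    if "cyclically_generated TYPE('a)" "cyclically_essential_gc \<alpha> \<beta>" "additive \<beta>"
    by (rule udim_le_if_cyclically_essential_gc[OF gc assms(1) that])
  ultimately show ?thesis using i by (simp add: order_antisym)
qed

end
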